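(* Fix $\alpha \in (1/2, 1)$ and $\varepsilon>0$. Then there exists $n_0$ such that the following holds for all $n>n_0$: every $n$-vertex graph $G$ with at least $\lfloor n^2/4\rfloor+1$ edges and $b(G)<\alpha n/2$ satisfies $$t(G) > (\alpha(1-\alpha)-\varepsilon) \frac{n^2}{4}.$$
   Context: Graphs are finite and simple. A book of size $b$ in a graph is an edge that lies in $b$ triangles; $b(G)$ denotes the maximum size of a book in $G$, i.e. the maximum, over all edges $e$ of $G$, of the number of triangles of $G$ containing $e$. $t(G)$ denotes the number of triangles in $G$. *)

theory Defs
  imports Complex_Main
begin

definition simple_graph :: "'a set \<Rightarrow> 'a set set \<Rightarrow> bool" where
  "simple_graph V E \<longleftrightarrow> finite V \<and> (\<forall>e\<in>E. e \<subseteq> V \<and> card e = 2)"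

definition triangles :: "'a set \<Rightarrow> 'a set set \<Rightarrow> 'a set set" where
  "triangles V E = {T. T \<subseteq> V \<and> card T = 3 \<and> (\<forall>x\<in>T. \<forall>y\<in>T. x \<noteq> y \<longrightarrow> {x, y} \<in> E)}"

definition num_triangles :: "'a set \<Rightarrow> 'a set set \<Rightarrow> nat" where
  "num_triangles V E = card (triangles V E)"

definition book_size :: "'a set \<Rightarrow> 'a set set \<Rightarrow> 'a set \<Rightarrow> nat" where
  "book_size V E e = card {T \<in> triangles V E. e \<subseteq> T}"

definition max_book :: "'a set \<Rightarrow> 'a set set \<Rightarrow> nat" where
  "max_book V E = Max (insert 0 (book_size V E ` E))"

end

(*
  Suppose t(G) \<le> (\<alpha>(1 - \<alpha>) - \<epsilon>) n\<^sup>2/4 \<le> n\<^sup>2/16.  Averaging over the neighbourhood cuts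
  (N(v), V - N(v)) shows that some cut, hence also a maximum cut (A, V - A), leaves only
  O(t/n) = O(n) edges uncut.  As e(G) > n\<^sup>2/4 \<ge> |A| |V - A|, both sides have about n/2 vertices
  and fewer cross pairs are non-edges than edges are uncut; so only O(1/\<delta>) vertices are heavy,
  i.e. miss at least \<delta> n cross neighbours.

  Two adjacent vertices on the same side have at least (size of the other side) minus their
  missing cross neighbours as common neighbours, but at most b(G) < \<alpha> n/2 of them.  Hence no
  uncut edge joins two light vertices, and a heavy vertex x with a light neighbour y on its side
  has fewer than \<beta> = b(G) + \<delta> n cross neighbours, while xy lies in almost as many triangles as
  x has cross neighbours.  Weighing the cross non-edges at heavy vertices against their light
  neighbours with weight \<beta> gives t(G) \<ge> \<beta> (c - \<beta>) - O(\<delta> n\<^sup>2) for the smaller side c \<ge> (1/2 - \<delta>) n,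
  and c - O(1) \<le> 2\<beta> \<le> (\<alpha> + 2\<delta>) n turns this into t(G) \<ge> (\<alpha>(1 - \<alpha>)/4 - O(\<delta>)) n\<^sup>2.
*)

theory Submission
  imports Defs
begin

declare sum_of_bool_eq[simp del]

lemma sum_of_bool_card:
  "finite S \<Longrightarrow> (\<Sum>p\<in>S. (of_bool (P p) :: real)) = real (card {p\<in>S. P p})"
  using sum_of_bool_eq[of S P] by (simp add: Int_def)

lemma sum_triple_of_bool_card:
  assumes "finite X" "finite Y" "finite Z"
  shows "(\<Sum>x\<in>X. \<Sum>y\<in>Y. \<Sum>z\<in>Z. (of_bool (P x y z) :: real))
         = real (card {p\<in>X\<times>Y\<times>Z. P (fst p) (fst (snd p)) (snd (snd p))})"
proof -
  have "(\<Sum>x\<in>X. \<Sum>y\<in>Y. \<Sum>z\<in>Z. (of_bool (P x y z) :: real))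
      = (\<Sum>p\<in>X\<times>Y\<times>Z. of_bool (P (fst p) (fst (snd p)) (snd (snd p))))"
    by (simp add: sum.cartesian_product split_def)
  then show ?thesis
    using assms by (simp add: sum_of_bool_card)
qed

lemma sum_sum_split_symmetric:
  fixes f :: "'a \<Rightarrow> 'a \<Rightarrow> 'b :: comm_semiring_1"
  assumes "finite V" "H \<subseteq> V" and sym: "\<And>x y. f x y = f y x"
  shows "(\<Sum>x\<in>V. \<Sum>y\<in>V. f x y) = (\<Sum>x\<in>H. \<Sum>y\<in>H. f x y) + 2 * (\<Sum>x\<in>H. \<Sum>y\<in>V-H. f x y)
           + (\<Sum>x\<in>V-H. \<Sum>y\<in>V-H. f x y)"
proof -
  have split: "sum g V = sum g H + sum g (V - H)" for g :: "'a \<Rightarrow> 'b"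
    using sum.subset_diff[OF assms(2,1), of g] by (simp add: add.commute)
  have swap: "(\<Sum>x\<in>V-H. \<Sum>y\<in>H. f x y) = (\<Sum>x\<in>H. \<Sum>y\<in>V-H. f x y)"
    by (subst sum.swap) (simp add: sym)
  have "(\<Sum>x\<in>V. \<Sum>y\<in>V. f x y)
      = ((\<Sum>x\<in>H. \<Sum>y\<in>H. f x y) + (\<Sum>x\<in>V-H. \<Sum>y\<in>H. f x y))
        + ((\<Sum>x\<in>H. \<Sum>y\<in>V-H. f x y) + (\<Sum>x\<in>V-H. \<Sum>y\<in>V-H. f x y))"
    by (simp only: split sum.distrib)
  then show ?thesis
    unfolding swap by (simp add: algebra_simps mult_2)
qed

definition distinct_triples :: "'a set \<Rightarrow> ('a \<times> 'a \<times> 'a) set" where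
  "distinct_triples T = {(x, y, z). x \<in> T \<and> y \<in> T \<and> z \<in> T \<and> x \<noteq> y \<and> y \<noteq> z \<and> x \<noteq> z}"

lemma card_distinct_triples_le: "card T = 3 \<Longrightarrow> card (distinct_triples T) \<le> 6"
proof -
  assume "card T = 3"
  then obtain a b c where T: "T = {a, b, c}"
    by (auto simp: card_3_iff)
  let ?perms = "[(a,b,c), (a,c,b), (b,a,c), (b,c,a), (c,a,b), (c,b,a)]"
  have "distinct_triples T \<subseteq> set ?perms"
    unfolding T distinct_triples_def by auto
  then have "card (distinct_triples T) \<le> card (set ?perms)"
    by (rule card_mono[OF finite_set])
  also have "\<dots> \<le> 6"
    using card_length[of ?perms] by simp
  finally show ?thesis .
qed

locale finite_simple_graph =
  fixes V :: "'a set" and E :: "'a set set"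
  assumes simple: "simple_graph V E"
begin

definition adj :: "'a \<Rightarrow> 'a \<Rightarrow> bool" where
  "adj x y \<longleftrightarrow> {x, y} \<in> E"

definition degree :: "'a \<Rightarrow> real" where
  "degree x = (\<Sum>y\<in>V. of_bool (adj x y))"

definition codegree :: "'a \<Rightarrow> 'a \<Rightarrow> real" where
  "codegree x y = (\<Sum>z\<in>V. of_bool (adj x z \<and> adj y z))"

definition ordered_triangles :: real where
  "ordered_triangles = (\<Sum>x\<in>V. \<Sum>y\<in>V. \<Sum>z\<in>V. of_bool (adj x y \<and> adj y z \<and> adj x z))"

definition same_side_pairs :: "'a set \<Rightarrow> real" where
  "same_side_pairs A = (\<Sum>x\<in>V. \<Sum>y\<in>V. of_bool (adj x y \<and> (x \<in> A \<longleftrightarrow> y \<in> A)))"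

lemma finite_vertices: "finite V"
  using simple unfolding simple_graph_def by blast

lemma edgeD: "e \<in> E \<Longrightarrow> e \<subseteq> V \<and> card e = 2"
  using simple unfolding simple_graph_def by blast

lemma finite_edges: "finite E"
  using edgeD finite_vertices by (meson PowI finite_Pow_iff finite_subset subsetI)

lemma adj_sym: "adj x y \<longleftrightarrow> adj y x"
  unfolding adj_def by (metis insert_commute)

lemma not_adj_self: "\<not> adj x x"
  using edgeD[of "{x}"] unfolding adj_def by auto

lemma adj_in_vertices: "adj x y \<Longrightarrow> x \<in> V \<and> y \<in> V"
  unfolding adj_def using edgeD by blast

lemma sum_degree: "(\<Sum>x\<in>V. degree x) = 2 * real (card E)"
proof -
  let ?P = "{p\<in>V\<times>V. adj (fst p) (snd p)}"
  let ?ends = "\<lambda>e. {p. {fst p, snd p} = e}"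
  have ends_two: "card (?ends e) = 2" if e: "e \<in> E" for e
  proof -
    obtain u v where uv: "e = {u, v}" "u \<noteq> v"
      using edgeD[OF e] by (auto simp: card_2_iff)
    have "?ends e = {(u, v), (v, u)}"
      unfolding uv by (auto simp: doubleton_eq_iff)
    then show ?thesis using uv by simp
  qed
  have ends_finite: "finite (?ends e)" if "e \<in> E" for e
  proof (rule finite_subset[OF _ finite_cartesian_product[OF finite_vertices finite_vertices]])
    show "?ends e \<subseteq> V \<times> V" using edgeD[OF that] by (auto simp: mem_Times_iff)
  qed
  have P_eq: "?P = (\<Union>e\<in>E. ?ends e)"
    unfolding adj_def using edgeD by (auto simp: mem_Times_iff)
  have "(\<Sum>x\<in>V. degree x) = (\<Sum>p\<in>V\<times>V. of_bool (adj (fst p) (snd p)))"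
    unfolding degree_def by (simp add: sum.cartesian_product split_def)
  also have "\<dots> = real (card ?P)"
    using finite_vertices by (simp add: sum_of_bool_card)
  also have "card ?P = (\<Sum>e\<in>E. card (?ends e))"
    unfolding P_eq by (rule card_UN_disjoint) (use finite_edges ends_finite in auto)
  also have "\<dots> = 2 * card E"
    by (simp add: ends_two)
  finally show ?thesis by simp
qed

lemma dense_of_card_edges:
  assumes "card V ^ 2 div 4 + 1 \<le> card E"
  shows "real (card V) ^ 2 \<le> 4 * real (card E)"
proof -
  have "card V ^ 2 \<le> 4 * card E"
    using assms by linarith
  then show ?thesis
    by (metis of_nat_le_iff of_nat_mult of_nat_numeral of_nat_power)
qed

lemma finite_triangles: "finite (triangles V E)"
  by (rule finite_subset[of _ "Pow V"]) (auto simp: triangles_def finite_vertices)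

lemma triangle_of_adj:
  assumes "adj x y" "adj y z" "adj x z"
  shows "{x, y, z} \<in> triangles V E"
proof -
  have "x \<noteq> y" "y \<noteq> z" "x \<noteq> z"
    using assms not_adj_self by metis+
  then show ?thesis
    using assms adj_in_vertices adj_sym unfolding triangles_def adj_def by auto
qed

lemma ordered_triangles_le: "ordered_triangles \<le> 6 * real (num_triangles V E)"
proof -
  let ?S = "{p\<in>V\<times>V\<times>V. adj (fst p) (fst (snd p)) \<and> adj (fst (snd p)) (snd (snd p)) \<and> adj (fst p) (snd (snd p))}"
  have sub: "?S \<subseteq> (\<Union>T\<in>triangles V E. distinct_triples T)"
  proof
    fix p assume p: "p \<in> ?S"
    obtain x y z where pe: "p = (x, y, z)" by (cases p) auto
    have a: "adj x y" "adj y z" "adj x z" using p pe by auto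
    then have "x \<noteq> y" "y \<noteq> z" "x \<noteq> z" using not_adj_self by metis+
    then have "p \<in> distinct_triples {x, y, z}" using pe by (simp add: distinct_triples_def)
    then show "p \<in> (\<Union>T\<in>triangles V E. distinct_triples T)"
      using triangle_of_adj[OF a] by blast
  qed
  have "ordered_triangles = real (card ?S)"
    unfolding ordered_triangles_def using finite_vertices by (intro sum_triple_of_bool_card)
  also have "card ?S \<le> card (\<Union>T\<in>triangles V E. distinct_triples T)"
  proof (rule card_mono[OF _ sub])
    have "(\<Union>T\<in>triangles V E. distinct_triples T) \<subseteq> V \<times> V \<times> V"
      unfolding triangles_def distinct_triples_def by auto
    then show "finite (\<Union>T\<in>triangles V E. distinct_triples T)"
      by (rule finite_subset) (simp add: finite_vertices)
  qed
  also have "\<dots> \<le> (\<Sum>T\<in>triangles V E. card (distinct_triples T))"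
    by (rule card_UN_le[OF finite_triangles])
  also have "\<dots> \<le> (\<Sum>T\<in>triangles V E. 6)"
    by (rule sum_mono) (simp add: card_distinct_triples_le triangles_def)
  also have "\<dots> = 6 * num_triangles V E"
    by (simp add: num_triangles_def)
  finally show ?thesis by simp
qed

lemma codegree_le_max_book:
  assumes xy: "adj x y"
  shows "codegree x y \<le> real (max_book V E)"
proof -
  let ?N = "{z\<in>V. adj x z \<and> adj y z}"
  have "card ?N \<le> card {T \<in> triangles V E. {x, y} \<subseteq> T}"
  proof (rule card_inj_on_le[where f = "\<lambda>z. {x, y, z}"])
    show "inj_on (\<lambda>z. {x, y, z}) ?N"
    proof
      fix z z' assume "z \<in> ?N" "z' \<in> ?N" and eq: "{x, y, z} = {x, y, z'}"
      then have "z \<noteq> x" "z \<noteq> y" "z' \<noteq> x" "z' \<noteq> y" using not_adj_self by auto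
      then show "z = z'" using eq by (metis insertE insertI1 insert_commute singletonD)
    qed
    show "(\<lambda>z. {x, y, z}) ` ?N \<subseteq> {T \<in> triangles V E. {x, y} \<subseteq> T}"
      using triangle_of_adj[OF xy] by auto
  qed (simp add: finite_triangles)
  also have "\<dots> = book_size V E {x, y}"
    by (simp add: book_size_def)
  also have "\<dots> \<le> max_book V E"
    using xy finite_edges unfolding max_book_def adj_def by simp
  finally show ?thesis
    unfolding codegree_def using finite_vertices by (simp add: sum_of_bool_card)
qed

lemma sum_degree_squares:
  "(\<Sum>v\<in>V. \<Sum>x\<in>V. \<Sum>y\<in>V. (of_bool (adj x y \<and> adj v x) :: real)) = (\<Sum>x\<in>V. degree x * degree x)"
proof -
  have "(\<Sum>v\<in>V. \<Sum>x\<in>V. \<Sum>y\<in>V. (of_bool (adj x y \<and> adj v x) :: real))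
      = (\<Sum>v\<in>V. \<Sum>x\<in>V. of_bool (adj v x) * degree x)"
    unfolding degree_def by (simp add: sum_distrib_left of_bool_conj mult.commute)
  also have "\<dots> = (\<Sum>x\<in>V. \<Sum>v\<in>V. of_bool (adj x v) * degree x)"
    by (subst sum.swap) (simp add: adj_sym)
  also have "\<dots> = (\<Sum>x\<in>V. degree x * degree x)"
    unfolding degree_def by (simp add: sum_distrib_right)
  finally show ?thesis .
qed

lemma sum_same_side_pairs_neighbourhoods:
  "(\<Sum>v\<in>V. same_side_pairs {x\<in>V. adj v x})
     = real (card V) * (\<Sum>x\<in>V. degree x) - 2 * (\<Sum>x\<in>V. degree x * degree x) + 2 * ordered_triangles"
proof -
  have pointwise: "(of_bool (adj x y \<and> (adj v x \<longleftrightarrow> adj v y)) :: real)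
      = of_bool (adj x y) - of_bool (adj x y \<and> adj v x) - of_bool (adj y x \<and> adj v y)
        + 2 * of_bool (adj v x \<and> adj x y \<and> adj v y)" for v x y
    using adj_sym[of x y] by (cases "adj x y"; cases "adj v x"; cases "adj v y") auto
  have nbhd: "same_side_pairs {x\<in>V. adj v x}
      = (\<Sum>x\<in>V. \<Sum>y\<in>V. (of_bool (adj x y \<and> (adj v x \<longleftrightarrow> adj v y)) :: real))" for v
    unfolding same_side_pairs_def by (intro sum.cong refl) auto
  have swapped: "(\<Sum>v\<in>V. \<Sum>x\<in>V. \<Sum>y\<in>V. (of_bool (adj y x \<and> adj v y) :: real))
      = (\<Sum>x\<in>V. degree x * degree x)"
    unfolding sum_degree_squares[symmetric] by (rule sum.cong[OF refl]) (rule sum.swap)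
  show ?thesis
    unfolding nbhd pointwise
    by (simp only: sum.distrib sum_subtractf sum_distrib_left[symmetric] sum_degree_squares swapped)
      (simp add: degree_def ordered_triangles_def)
qed

lemma sum_same_side_pairs_neighbourhoods_le:
  assumes dense: "real (card V) ^ 2 \<le> 4 * real (card E)"
  shows "(\<Sum>v\<in>V. same_side_pairs {x\<in>V. adj v x}) \<le> 2 * ordered_triangles"
proof -
  let ?n = "real (card V)"
  let ?S = "\<Sum>x\<in>V. degree x"
  let ?Q = "\<Sum>x\<in>V. degree x * degree x"
  have "0 \<le> (\<Sum>x\<in>V. (2 * degree x - ?n) ^ 2)"
    by (simp add: sum_nonneg)
  also have "\<dots> = 4 * ?Q - 4 * ?n * ?S + ?n ^ 3"
    by (simp add: power2_eq_square power3_eq_cube algebra_simps sum.distrib sum_subtractf sum_distrib_left)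
  finally have "?n * (2 * ?S - ?n ^ 2) \<le> 4 * ?Q - 2 * ?n * ?S"
    by (simp add: power2_eq_square power3_eq_cube algebra_simps)
  moreover have "0 \<le> ?n * (2 * ?S - ?n ^ 2)"
    using dense by (simp add: sum_degree)
  ultimately have "?n * ?S \<le> 2 * ?Q"
    by linarith
  then show ?thesis
    unfolding sum_same_side_pairs_neighbourhoods by linarith
qed

lemma exists_neighbourhood_cut:
  assumes "V \<noteq> {}" and dense: "real (card V) ^ 2 \<le> 4 * real (card E)"
  shows "\<exists>v\<in>V. real (card V) * same_side_pairs {x\<in>V. adj v x} \<le> 2 * ordered_triangles"
proof (rule ccontr)
  let ?n = "real (card V)"
  assume "\<not> ?thesis"
  then have "\<forall>v\<in>V. 2 * ordered_triangles < ?n * same_side_pairs {x\<in>V. adj v x}"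
    by (simp add: not_le)
  then have "(\<Sum>v\<in>V. 2 * ordered_triangles) < (\<Sum>v\<in>V. ?n * same_side_pairs {x\<in>V. adj v x})"
    using assms(1) finite_vertices by (intro sum_strict_mono) auto
  then have "?n * (2 * ordered_triangles) < ?n * (\<Sum>v\<in>V. same_side_pairs {x\<in>V. adj v x})"
    by (simp add: sum_distrib_left)
  moreover have "0 < ?n"
    using assms(1) finite_vertices by (simp add: card_gt_0_iff)
  ultimately show False
    using sum_same_side_pairs_neighbourhoods_le[OF dense] by simp
qed

lemma exists_minimal_cut: "\<exists>A\<subseteq>V. \<forall>B\<subseteq>V. same_side_pairs A \<le> same_side_pairs B"
proof -
  have fin: "finite (same_side_pairs ` Pow V)"
    using finite_vertices by simp
  have "Min (same_side_pairs ` Pow V) \<in> same_side_pairs ` Pow V"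
    using Min_in[OF fin] by blast
  then obtain A where A: "A \<subseteq> V" "same_side_pairs A = Min (same_side_pairs ` Pow V)"
    by auto
  have "same_side_pairs A \<le> same_side_pairs B" if "B \<subseteq> V" for B
    unfolding A(2) using that by (intro Min_le[OF fin]) simp
  then show ?thesis
    using A(1) by blast
qed

lemma exists_max_cut_few_uncut:
  assumes "V \<noteq> {}" and dense: "real (card V) ^ 2 \<le> 4 * real (card E)"
  shows "\<exists>A\<subseteq>V. (\<forall>B\<subseteq>V. same_side_pairs A \<le> same_side_pairs B)
           \<and> real (card V) * same_side_pairs A \<le> 12 * real (num_triangles V E)"
proof -
  obtain v where "v \<in> V" and v: "real (card V) * same_side_pairs {x\<in>V. adj v x} \<le> 2 * ordered_triangles"
    using exists_neighbourhood_cut[OF assms] by blast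
  obtain A where A: "A \<subseteq> V" "\<forall>B\<subseteq>V. same_side_pairs A \<le> same_side_pairs B"
    using exists_minimal_cut by blast
  then have "real (card V) * same_side_pairs A \<le> real (card V) * same_side_pairs {x\<in>V. adj v x}"
    by (intro mult_left_mono) auto
  then have "real (card V) * same_side_pairs A \<le> 12 * real (num_triangles V E)"
    using v ordered_triangles_le by linarith
  then show ?thesis
    using A by blast
qed

lemma same_side_pairs_flip:
  assumes "x \<in> V"
  shows "same_side_pairs (if x \<in> A then A - {x} else insert x A)
         = same_side_pairs A + 2 * ((\<Sum>y\<in>V. of_bool (adj x y \<and> \<not> (x \<in> A \<longleftrightarrow> y \<in> A)))
                                     - (\<Sum>y\<in>V. of_bool (adj x y \<and> (x \<in> A \<longleftrightarrow> y \<in> A))))"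
    (is "same_side_pairs ?A' = _")
proof -
  define h where "h w = (of_bool (adj x w \<and> \<not> (x \<in> A \<longleftrightarrow> w \<in> A))
                         - of_bool (adj x w \<and> (x \<in> A \<longleftrightarrow> w \<in> A)) :: real)" for w
  have mem: "u \<in> ?A' \<longleftrightarrow> (if u = x then u \<notin> A else u \<in> A)" for u
    by auto
  have pointwise: "(of_bool (adj u w \<and> (u \<in> ?A' \<longleftrightarrow> w \<in> ?A')) :: real)
      = of_bool (adj u w \<and> (u \<in> A \<longleftrightarrow> w \<in> A)) + ((if u = x then h w else 0) + (if w = x then h u else 0))"
    for u w
    unfolding h_def mem using not_adj_self[of x] adj_sym[of u x]
    by (cases "u = x"; cases "w = x"; cases "adj u w"; cases "u \<in> A"; cases "w \<in> A") auto
  have "same_side_pairs ?A' = same_side_pairs A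
      + ((\<Sum>u\<in>V. \<Sum>w\<in>V. if u = x then h w else 0) + (\<Sum>u\<in>V. \<Sum>w\<in>V. if w = x then h u else 0))"
    unfolding same_side_pairs_def pointwise by (simp only: sum.distrib)
  also have "(\<Sum>u\<in>V. \<Sum>w\<in>V. if u = x then h w else 0) = sum h V"
  proof -
    have "(\<Sum>w\<in>V. if u = x then h w else 0) = (if u = x then sum h V else 0)" for u
      by simp
    then show ?thesis
      using assms finite_vertices by (simp add: sum.delta)
  qed
  also have "(\<Sum>u\<in>V. \<Sum>w\<in>V. if w = x then h u else 0) = sum h V"
    using assms finite_vertices by (simp add: sum.delta')
  finally show ?thesis
    unfolding h_def by (simp add: sum_subtractf)
qed

end

locale max_cut = finite_simple_graph +
  fixes A :: "'a set"
  assumes cut_subset: "A \<subseteq> V"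
    and cut_minimal: "\<And>B. B \<subseteq> V \<Longrightarrow> same_side_pairs A \<le> same_side_pairs B"
begin

definition same_side :: "'a \<Rightarrow> 'a \<Rightarrow> bool" where
  "same_side x y \<longleftrightarrow> (x \<in> A \<longleftrightarrow> y \<in> A)"

definition deg_in :: "'a \<Rightarrow> real" where
  "deg_in x = (\<Sum>y\<in>V. of_bool (adj x y \<and> same_side x y))"

definition deg_out :: "'a \<Rightarrow> real" where
  "deg_out x = (\<Sum>y\<in>V. of_bool (adj x y \<and> \<not> same_side x y))"

definition opp_size :: "'a \<Rightarrow> real" where
  "opp_size x = (\<Sum>y\<in>V. of_bool (\<not> same_side x y))"

definition nondeg_out :: "'a \<Rightarrow> real" where
  "nondeg_out x = (\<Sum>y\<in>V. of_bool (\<not> same_side x y \<and> \<not> adj x y))"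

definition codegree_opp :: "'a \<Rightarrow> 'a \<Rightarrow> real" where
  "codegree_opp x y = (\<Sum>z\<in>V. of_bool (\<not> same_side x z \<and> adj x z \<and> adj y z))"

definition min_side :: real where
  "min_side = real (min (card A) (card (V - A)))"

lemma same_side_sym: "same_side x y \<longleftrightarrow> same_side y x"
  unfolding same_side_def by blast

lemma deg_in_le_deg_out:
  assumes x: "x \<in> V"
  shows "deg_in x \<le> deg_out x"
proof -
  have "same_side_pairs A \<le> same_side_pairs (if x \<in> A then A - {x} else insert x A)"
    using cut_subset x by (intro cut_minimal) auto
  then show ?thesis
    unfolding same_side_pairs_flip[OF x] deg_in_def deg_out_def same_side_def by simp
qed

lemma degree_eq: "degree x = deg_in x + deg_out x"
  unfolding degree_def deg_in_def deg_out_def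
  by (subst sum.distrib[symmetric]) (intro sum.cong refl, auto)

lemma opp_size_eq: "opp_size x = deg_out x + nondeg_out x"
  unfolding opp_size_def deg_out_def nondeg_out_def
  by (subst sum.distrib[symmetric]) (intro sum.cong refl, auto)

lemma nondeg_out_nonneg: "0 \<le> nondeg_out x"
  unfolding nondeg_out_def by (simp add: sum_nonneg)

lemma same_side_pairs_cut: "same_side_pairs A = (\<Sum>x\<in>V. deg_in x)"
  unfolding same_side_pairs_def deg_in_def same_side_def ..

lemma opp_size_eq_card: "x \<in> V \<Longrightarrow> opp_size x = real (card (if x \<in> A then V - A else A))"
proof -
  assume "x \<in> V"
  have "{y\<in>V. \<not> same_side x y} = (if x \<in> A then V - A else A)"
    using cut_subset unfolding same_side_def by auto
  then show ?thesis
    unfolding opp_size_def using finite_vertices by (simp add: sum_of_bool_card)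
qed

lemma min_side_le_opp_size: "x \<in> V \<Longrightarrow> min_side \<le> opp_size x"
  by (simp add: opp_size_eq_card min_side_def)

lemma sum_opp_size: "(\<Sum>x\<in>V. opp_size x) = 2 * real (card A) * real (card (V - A))"
proof -
  have "(\<Sum>x\<in>V. opp_size x) = (\<Sum>x\<in>A. opp_size x) + (\<Sum>x\<in>V - A. opp_size x)"
    using sum.subset_diff[OF cut_subset finite_vertices, of opp_size] by simp
  also have "(\<Sum>x\<in>A. opp_size x) = (\<Sum>x\<in>A. real (card (V - A)))"
    using cut_subset by (intro sum.cong refl) (auto simp: opp_size_eq_card)
  also have "(\<Sum>x\<in>V - A. opp_size x) = (\<Sum>x\<in>V - A. real (card A))"
    by (intro sum.cong refl) (auto simp: opp_size_eq_card)
  finally show ?thesis by simp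
qed

lemma twice_card_edges:
  "2 * real (card E)
     = (\<Sum>x\<in>V. deg_in x) + 2 * real (card A) * real (card (V - A)) - (\<Sum>x\<in>V. nondeg_out x)"
  using sum_degree sum_opp_size
  by (simp add: degree_eq opp_size_eq sum.distrib)

lemma card_cut_sides: "card A + card (V - A) = card V"
  using cut_subset finite_vertices
  by (metis card_Diff_subset card_mono le_add_diff_inverse finite_subset)

text \<open>Because \<open>|A| |V - A| \<le> n\<^sup>2/4 < |E|\<close> and \<open>twice_card_edges\<close>.\<close>
lemma sum_nondeg_out_add_two_le:
  assumes "card V ^ 2 div 4 + 1 \<le> card E"
  shows "(\<Sum>x\<in>V. nondeg_out x) + 2 \<le> (\<Sum>x\<in>V. deg_in x)"
proof -
  let ?a = "card A" and ?c = "card (V - A)"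
  have "4 * real ?a * real ?c \<le> real (card V) ^ 2"
  proof -
    have "0 \<le> (real ?a - real ?c) ^ 2" by simp
    moreover have "real (card V) = real ?a + real ?c"
      using card_cut_sides by linarith
    ultimately show ?thesis
      by (simp add: power2_eq_square algebra_simps)
  qed
  then have "4 * (?a * ?c) \<le> card V ^ 2"
    by (metis of_nat_le_iff of_nat_mult of_nat_numeral of_nat_power mult.assoc)
  then have "?a * ?c \<le> card V ^ 2 div 4"
    by (simp add: less_eq_div_iff_mult_less_eq mult.commute)
  then have "real (?a * ?c + 1) \<le> real (card E)"
    using assms by linarith
  then show ?thesis
    using twice_card_edges by simp
qed

lemma min_side_deviation:
  assumes "real (card V) ^ 2 \<le> 4 * real (card E)"
  shows "(real (card V) - 2 * min_side) ^ 2 \<le> 2 * (\<Sum>x\<in>V. deg_in x)"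
proof -
  let ?a = "real (card A)" and ?c = "real (card (V - A))"
  have n: "real (card V) = ?a + ?c"
    using card_cut_sides by linarith
  have "(real (card V) - 2 * min_side) ^ 2 = real (card V) ^ 2 - 4 * ?a * ?c"
    unfolding min_side_def n by (cases "card A \<le> card (V - A)") (simp_all add: power2_eq_square algebra_simps)
  then show ?thesis
    using assms twice_card_edges sum_nonneg[of V nondeg_out] nondeg_out_nonneg by simp
qed

lemma card_nondeg_out_ge_le:
  assumes "0 < \<theta>" and "card V ^ 2 div 4 + 1 \<le> card E"
  shows "real (card {x\<in>V. \<theta> \<le> nondeg_out x}) \<le> (\<Sum>x\<in>V. deg_in x) / \<theta>"
proof -
  let ?H = "{x\<in>V. \<theta> \<le> nondeg_out x}"
  have "real (card ?H) * \<theta> = (\<Sum>x\<in>?H. \<theta>)" by simp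
  also have "\<dots> \<le> (\<Sum>x\<in>?H. nondeg_out x)" by (rule sum_mono) simp
  also have "\<dots> \<le> (\<Sum>x\<in>V. nondeg_out x)"
    by (rule sum_mono2[OF finite_vertices]) (auto simp: nondeg_out_nonneg)
  also have "\<dots> \<le> (\<Sum>x\<in>V. deg_in x)"
    using sum_nondeg_out_add_two_le[OF assms(2)] by linarith
  finally show ?thesis
    using assms(1) by (simp add: field_simps)
qed

lemma codegree_opp_le_max_book: "adj x y \<Longrightarrow> codegree_opp x y \<le> real (max_book V E)"
proof -
  assume "adj x y"
  have "codegree_opp x y \<le> codegree x y"
    unfolding codegree_opp_def codegree_def by (intro sum_mono) auto
  then show ?thesis
    using codegree_le_max_book[OF \<open>adj x y\<close>] by linarith
qed

lemma codegree_opp_ge: "same_side x y \<Longrightarrow> opp_size x - nondeg_out x - nondeg_out y \<le> codegree_opp x y"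
proof -
  assume s: "same_side x y"
  have "(of_bool (\<not> same_side x z) :: real) - of_bool (\<not> same_side x z \<and> \<not> adj x z)
        - of_bool (\<not> same_side y z \<and> \<not> adj y z) \<le> of_bool (\<not> same_side x z \<and> adj x z \<and> adj y z)" for z
    using s unfolding same_side_def by auto
  then have "(\<Sum>z\<in>V. (of_bool (\<not> same_side x z) :: real) - of_bool (\<not> same_side x z \<and> \<not> adj x z)
        - of_bool (\<not> same_side y z \<and> \<not> adj y z)) \<le> codegree_opp x y"
    unfolding codegree_opp_def by (rule sum_mono)
  then show ?thesis
    unfolding opp_size_def nondeg_out_def by (simp add: sum_subtractf)
qed

lemma opp_triangle_vertices_eq:
  assumes eq: "{x, y, z} = {x', y', z'}"
    and H: "x \<in> H" "y \<notin> H" "x' \<in> H" "y' \<notin> H"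
    and sides: "same_side x y" "\<not> same_side x z" "same_side x' y'" "\<not> same_side x' z'"
    and "x' \<noteq> y'"
  shows "x' = x \<and> y' = y \<and> z' = z"
proof -
  have "z' = z"
  proof (rule ccontr)
    assume "z' \<noteq> z"
    then have "z' \<in> {x, y}" using eq by blast
    then have "\<not> same_side x' x" "\<not> same_side x' y" "\<not> same_side y' x" "\<not> same_side y' y"
      using sides unfolding same_side_def by blast+
    moreover have "x' \<in> {x, y, z}" "y' \<in> {x, y, z}"
      using eq by blast+
    ultimately have "x' = z" "y' = z"
      unfolding same_side_def by auto
    then show False using \<open>x' \<noteq> y'\<close> by simp
  qed
  moreover have "x' \<noteq> z'" "y' \<noteq> z'"
    using sides unfolding same_side_def by blast+
  ultimately have "x' \<in> {x, y}" "y' \<in> {x, y}"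
    using eq by blast+
  then show ?thesis
    using H \<open>z' = z\<close> by blast
qed

text \<open>A triangle with vertices \<open>x \<in> H\<close>, \<open>y \<notin> H\<close> on one side of the cut and \<open>z\<close> on the
  other is counted at most once: \<open>z\<close> is its unique vertex on the other side.\<close>
lemma sum_opp_triangles_le:
  assumes HV: "H \<subseteq> V"
  shows "(\<Sum>x\<in>H. \<Sum>y\<in>V-H. \<Sum>z\<in>V.
            (of_bool (adj x y \<and> same_side x y \<and> \<not> same_side x z \<and> adj x z \<and> adj y z) :: real))
         \<le> real (num_triangles V E)"
proof -
  let ?P = "\<lambda>x y z. adj x y \<and> same_side x y \<and> \<not> same_side x z \<and> adj x z \<and> adj y z"
  let ?S = "{p\<in>H\<times>(V-H)\<times>V. ?P (fst p) (fst (snd p)) (snd (snd p))}"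
  let ?T = "\<lambda>p. {fst p, fst (snd p), snd (snd p)}"
  have "inj_on ?T ?S"
  proof (rule inj_onI)
    fix p q assume "p \<in> ?S" "q \<in> ?S" "?T p = ?T q"
    moreover obtain x y z x' y' z' where "p = (x, y, z)" "q = (x', y', z')"
      by (cases p, cases q) auto
    ultimately show "p = q"
      using opp_triangle_vertices_eq[of x y z x' y' z' H] not_adj_self by auto
  qed
  moreover have "?T ` ?S \<subseteq> triangles V E"
    using triangle_of_adj adj_sym by auto
  ultimately have "card ?S \<le> card (triangles V E)"
    using card_inj_on_le finite_triangles by blast
  moreover have "(\<Sum>x\<in>H. \<Sum>y\<in>V-H. \<Sum>z\<in>V. (of_bool (?P x y z) :: real)) = real (card ?S)"
    using HV finite_vertices finite_subset by (intro sum_triple_of_bool_card) auto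
  ultimately show ?thesis
    by (simp add: num_triangles_def)
qed

end

locale heavy_light_cut = max_cut +
  fixes \<theta> :: real
  assumes \<theta>_pos: "0 < \<theta>"
    and book_gap: "real (max_book V E) + 2 * \<theta> \<le> min_side"
    and few_missing: "(\<Sum>x\<in>V. nondeg_out x) + 2 \<le> (\<Sum>x\<in>V. deg_in x)"
    and few_heavy: "2 * real (card {x\<in>V. \<theta> \<le> nondeg_out x}) < \<theta>"
begin

definition heavy :: "'a set" where
  "heavy = {x\<in>V. \<theta> \<le> nondeg_out x}"

definition light :: "'a set" where
  "light = V - heavy"

definition inner :: "'a \<Rightarrow> 'a \<Rightarrow> real" where
  "inner x y = of_bool (adj x y \<and> same_side x y)"

definition light_deg :: "'a \<Rightarrow> real" where
  "light_deg x = (\<Sum>y\<in>light. inner x y)"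

definition heavy_light_pairs :: real where
  "heavy_light_pairs = (\<Sum>x\<in>heavy. light_deg x)"

definition \<beta> :: real where
  "\<beta> = real (max_book V E) + \<theta>"

abbreviation h :: real where
  "h \<equiv> real (card heavy)"

lemma heavy_subset: "heavy \<subseteq> V"
  unfolding heavy_def by blast

lemma finite_heavy: "finite heavy"
  using heavy_subset finite_vertices finite_subset by blast

lemma light_nondeg_out: "y \<in> light \<Longrightarrow> nondeg_out y < \<theta>"
  unfolding light_def heavy_def by auto

lemma inner_sym: "inner x y = inner y x"
  unfolding inner_def by (simp add: adj_sym[of x y] same_side_sym[of x y])

lemma inner_adj: "inner x y \<noteq> 0 \<Longrightarrow> adj x y \<and> same_side x y"
  unfolding inner_def by simp

lemma light_deg_nonneg: "0 \<le> light_deg x"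
  unfolding light_deg_def inner_def by (simp add: sum_nonneg)

lemma \<beta>_nonneg: "0 \<le> \<beta>"
  unfolding \<beta>_def using \<theta>_pos by simp

text \<open>An inner edge \<open>xy\<close> has at least \<open>opp_size x - nondeg_out x - nondeg_out y\<close> common
  neighbours across the cut, but at most \<open>b(G)\<close>.\<close>
lemma inner_edge_nondeg_out:
  assumes "inner x y \<noteq> 0"
  shows "opp_size x - nondeg_out x - nondeg_out y \<le> real (max_book V E)"
  using inner_adj[OF assms] codegree_opp_ge codegree_opp_le_max_book by fastforce

lemma no_inner_light:
  assumes "x \<in> light" "y \<in> light"
  shows "inner x y = 0"
proof (rule ccontr)
  assume "inner x y \<noteq> 0"
  moreover have "min_side \<le> opp_size x"
    using assms(1) unfolding light_def by (intro min_side_le_opp_size) simp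
  ultimately show False
    using inner_edge_nondeg_out[of x y] light_nondeg_out[OF assms(1)] light_nondeg_out[OF assms(2)]
      book_gap by linarith
qed

lemma nondeg_out_gt:
  assumes "0 < light_deg x"
  shows "opp_size x - \<beta> < nondeg_out x"
proof -
  obtain y where "y \<in> light" "inner x y \<noteq> 0"
    using assms unfolding light_deg_def by (metis less_irrefl sum.neutral)
  then show ?thesis
    using inner_edge_nondeg_out light_nondeg_out unfolding \<beta>_def by fastforce
qed

lemma light_deg_le: "x \<in> heavy \<Longrightarrow> light_deg x \<le> opp_size x - nondeg_out x"
proof -
  assume "x \<in> heavy"
  then have "light_deg x \<le> deg_in x"
    unfolding light_deg_def deg_in_def inner_def light_def
    by (intro sum_mono2[OF finite_vertices]) auto
  also have "\<dots> \<le> deg_out x"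
    using \<open>x \<in> heavy\<close> heavy_subset by (intro deg_in_le_deg_out) auto
  finally show ?thesis
    by (simp add: opp_size_eq)
qed

lemma sum_deg_in_split:
  "(\<Sum>x\<in>V. deg_in x) = (\<Sum>x\<in>heavy. \<Sum>y\<in>heavy. inner x y) + 2 * heavy_light_pairs"
proof -
  have "(\<Sum>x\<in>light. \<Sum>y\<in>light. inner x y) = 0"
    by (simp add: no_inner_light)
  then show ?thesis
    using sum_sum_split_symmetric[OF finite_vertices heavy_subset, of inner] inner_sym
    unfolding deg_in_def heavy_light_pairs_def light_deg_def light_def inner_def by simp
qed

lemma sum_nondeg_out_heavy_le: "(\<Sum>x\<in>heavy. nondeg_out x) \<le> h ^ 2 + (\<Sum>x\<in>V. nondeg_out x) / 2"
proof -
  define miss where "miss x y = (of_bool (\<not> same_side x y \<and> \<not> adj x y) :: real)" for x y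
  have miss01: "0 \<le> miss x y" "miss x y \<le> 1" for x y
    unfolding miss_def by auto
  have "(\<Sum>x\<in>heavy. \<Sum>y\<in>heavy. miss x y) \<le> (\<Sum>x\<in>heavy. \<Sum>y\<in>heavy. 1)"
    by (intro sum_mono miss01)
  then have HH: "(\<Sum>x\<in>heavy. \<Sum>y\<in>heavy. miss x y) \<le> h ^ 2"
    by (simp add: power2_eq_square)
  have nn: "0 \<le> (\<Sum>x\<in>heavy. \<Sum>y\<in>heavy. miss x y)" "0 \<le> (\<Sum>x\<in>light. \<Sum>y\<in>light. miss x y)"
    by (intro sum_nonneg miss01)+
  have total: "(\<Sum>x\<in>V. nondeg_out x) = (\<Sum>x\<in>heavy. \<Sum>y\<in>heavy. miss x y)
      + 2 * (\<Sum>x\<in>heavy. \<Sum>y\<in>light. miss x y) + (\<Sum>x\<in>light. \<Sum>y\<in>light. miss x y)"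
    using sum_sum_split_symmetric[OF finite_vertices heavy_subset, of miss]
    unfolding nondeg_out_def miss_def light_def by (simp add: adj_sym same_side_sym)
  have "nondeg_out x = (\<Sum>y\<in>heavy. miss x y) + (\<Sum>y\<in>light. miss x y)" for x
    unfolding nondeg_out_def miss_def light_def
    using sum.subset_diff[OF heavy_subset finite_vertices] by (simp add: add.commute)
  then have "(\<Sum>x\<in>heavy. nondeg_out x)
      = (\<Sum>x\<in>heavy. \<Sum>y\<in>heavy. miss x y) + (\<Sum>x\<in>heavy. \<Sum>y\<in>light. miss x y)"
    by (simp add: sum.distrib)
  then show ?thesis
    using total HH nn by linarith
qed

lemma heavy_light_pairs_ge: "(\<Sum>x\<in>heavy. nondeg_out x) - 2 * h ^ 2 \<le> heavy_light_pairs"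
proof -
  have "(\<Sum>x\<in>heavy. \<Sum>y\<in>heavy. inner x y) \<le> (\<Sum>x\<in>heavy. \<Sum>y\<in>heavy. 1)"
    unfolding inner_def by (intro sum_mono) simp
  then have "(\<Sum>x\<in>heavy. \<Sum>y\<in>heavy. inner x y) \<le> h ^ 2"
    by (simp add: power2_eq_square)
  then show ?thesis
    using sum_deg_in_split few_missing sum_nondeg_out_heavy_le zero_le_power2[of h] by linarith
qed

lemma heavy_light_pairs_le: "heavy_light_pairs \<le> (\<Sum>x\<in>V. deg_in x) / 2"
proof -
  have "0 \<le> (\<Sum>x\<in>heavy. \<Sum>y\<in>heavy. inner x y)"
    unfolding inner_def by (simp add: sum_nonneg)
  then show ?thesis
    using sum_deg_in_split by linarith
qed

lemma exists_heavy_light_edge: "\<exists>s\<in>heavy. 0 < light_deg s"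
proof (rule ccontr)
  assume "\<not> ?thesis"
  then have "\<forall>x\<in>heavy. light_deg x = 0"
    using light_deg_nonneg by (meson not_less order_antisym)
  then have "heavy_light_pairs = 0"
    unfolding heavy_light_pairs_def by simp
  then have "(\<Sum>x\<in>heavy. nondeg_out x) \<le> h * (2 * h)"
    using heavy_light_pairs_ge by (simp add: power2_eq_square)
  moreover have "h * \<theta> \<le> (\<Sum>x\<in>heavy. nondeg_out x)"
    using sum_mono[of heavy "\<lambda>_. \<theta>" nondeg_out] unfolding heavy_def by simp
  ultimately have "h * \<theta> \<le> h * (2 * h)"
    by linarith
  moreover have "heavy \<noteq> {}"
  proof
    assume "heavy = {}"
    then have "(\<Sum>x\<in>V. deg_in x) = 0"
      using sum_deg_in_split unfolding heavy_light_pairs_def by simp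
    then show False
      using few_missing sum_nonneg[of V nondeg_out] nondeg_out_nonneg by simp
  qed
  then have "1 \<le> h"
    using finite_heavy by (simp add: Suc_leI card_gt_0_iff)
  ultimately have "\<theta> \<le> 2 * h"
    by simp
  then show False
    using few_heavy unfolding heavy_def by simp
qed

text \<open>For \<open>light_deg x > 0\<close> the difference of the two sides is
  \<open>(\<beta> - light_deg x) (nondeg_out x - (opp_size x - \<beta>))\<close>, nonnegative by the two preceding lemmas.\<close>
lemma light_deg_weighted:
  assumes x: "x \<in> heavy"
  shows "\<beta> * (light_deg x - nondeg_out x) + (if 0 < light_deg x then \<beta> * (opp_size x - \<beta>) else 0)
           \<le> light_deg x * (opp_size x - nondeg_out x)"
proof (cases "0 < light_deg x")
  case True
  have "0 \<le> (\<beta> - light_deg x) * (nondeg_out x - (opp_size x - \<beta>))"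
    using nondeg_out_gt[OF True] light_deg_le[OF x] by (intro mult_nonneg_nonneg) auto
  then show ?thesis
    using True by (simp add: algebra_simps)
next
  case False
  then show ?thesis
    using light_deg_nonneg[of x] \<beta>_nonneg nondeg_out_nonneg[of x] by simp
qed

lemma triangles_ge_light_deg:
  "(\<Sum>x\<in>heavy. light_deg x * (opp_size x - nondeg_out x - \<theta>)) \<le> real (num_triangles V E)"
proof -
  let ?P = "\<lambda>x y z. adj x y \<and> same_side x y \<and> \<not> same_side x z \<and> adj x z \<and> adj y z"
  have "light_deg x * (opp_size x - nondeg_out x - \<theta>) \<le> (\<Sum>y\<in>light. \<Sum>z\<in>V. (of_bool (?P x y z) :: real))"
    for x
  proof -
    have "inner x y * (opp_size x - nondeg_out x - \<theta>) \<le> (\<Sum>z\<in>V. (of_bool (?P x y z) :: real))"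
      if y: "y \<in> light" for y
    proof (cases "adj x y \<and> same_side x y")
      case True
      then have "opp_size x - nondeg_out x - \<theta> \<le> codegree_opp x y"
        using codegree_opp_ge light_nondeg_out[OF y] by fastforce
      then show ?thesis
        using True unfolding inner_def codegree_opp_def by simp
    next
      case False
      then show ?thesis by (auto simp: inner_def)
    qed
    then show ?thesis
      unfolding light_deg_def sum_distrib_right by (rule sum_mono)
  qed
  then have "(\<Sum>x\<in>heavy. light_deg x * (opp_size x - nondeg_out x - \<theta>))
      \<le> (\<Sum>x\<in>heavy. \<Sum>y\<in>V-heavy. \<Sum>z\<in>V. (of_bool (?P x y z) :: real))"
    unfolding light_def by (rule sum_mono)
  also have "\<dots> \<le> real (num_triangles V E)"
    by (rule sum_opp_triangles_le[OF heavy_subset])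
  finally show ?thesis .
qed

lemma num_triangles_ge:
  "\<beta> * (min_side - \<beta>) - 2 * \<beta> * h ^ 2 - \<theta> * (\<Sum>x\<in>V. deg_in x) / 2 \<le> real (num_triangles V E)"
proof -
  let ?bonus = "\<lambda>x. if 0 < light_deg x then \<beta> * (opp_size x - \<beta>) else 0"
  obtain s where s: "s \<in> heavy" "0 < light_deg s"
    using exists_heavy_light_edge by blast
  have "\<beta> * (min_side - \<beta>) \<le> ?bonus s"
    using s min_side_le_opp_size[of s] heavy_subset \<beta>_nonneg by (auto intro!: mult_left_mono)
  also have "\<dots> \<le> (\<Sum>x\<in>heavy. ?bonus x)"
  proof (rule member_le_sum[OF s(1) _ finite_heavy])
    show "0 \<le> ?bonus x" if "x \<in> heavy - {s}" for x
      using that heavy_subset min_side_le_opp_size[of x] book_gap \<beta>_nonneg \<theta>_pos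
      unfolding \<beta>_def by (auto intro!: mult_nonneg_nonneg)
  qed
  finally have bonus: "\<beta> * (min_side - \<beta>) \<le> (\<Sum>x\<in>heavy. ?bonus x)" .
  have "\<beta> * (heavy_light_pairs - (\<Sum>x\<in>heavy. nondeg_out x)) + (\<Sum>x\<in>heavy. ?bonus x)
      \<le> (\<Sum>x\<in>heavy. light_deg x * (opp_size x - nondeg_out x))"
    using sum_mono[OF light_deg_weighted]
    unfolding heavy_light_pairs_def by (simp add: sum.distrib sum_distrib_left sum_subtractf right_diff_distrib)
  moreover have "(\<Sum>x\<in>heavy. light_deg x * (opp_size x - nondeg_out x)) - \<theta> * heavy_light_pairs
      \<le> real (num_triangles V E)"
    using triangles_ge_light_deg unfolding heavy_light_pairs_def
    by (simp add: right_diff_distrib sum_subtractf sum_distrib_left mult.commute)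
  moreover have "- (2 * \<beta> * h ^ 2) \<le> \<beta> * (heavy_light_pairs - (\<Sum>x\<in>heavy. nondeg_out x))"
    using mult_left_mono[OF heavy_light_pairs_ge \<beta>_nonneg] by (simp add: algebra_simps)
  moreover have "\<theta> * heavy_light_pairs \<le> \<theta> * (\<Sum>x\<in>V. deg_in x) / 2"
    using mult_left_mono[OF heavy_light_pairs_le] \<theta>_pos by simp
  ultimately show ?thesis
    using bonus by linarith
qed

lemma min_side_le_\<beta>: "min_side - 2 * h ^ 2 \<le> 2 * \<beta>"
proof (rule ccontr)
  assume "\<not> ?thesis"
  then have lt: "2 * \<beta> < min_side - 2 * h ^ 2" by simp
  define g where "g x = light_deg x - nondeg_out x" for x
  have g_bound: "g x < - 2 * h ^ 2" if "x \<in> heavy" "0 < light_deg x" for x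
    using nondeg_out_gt[of x] light_deg_le[of x] min_side_le_opp_size[of x] that heavy_subset lt
    unfolding g_def by fastforce
  have g_nonpos: "g x \<le> 0" if x: "x \<in> heavy" for x
  proof (cases "0 < light_deg x")
    case True
    then show ?thesis using g_bound[OF x] zero_le_power2[of h] by linarith
  next
    case False
    then show ?thesis using nondeg_out_nonneg[of x] unfolding g_def by linarith
  qed
  obtain s where s: "s \<in> heavy" "0 < light_deg s"
    using exists_heavy_light_edge by blast
  have "(\<Sum>x\<in>heavy. g x) = g s + (\<Sum>x\<in>heavy - {s}. g x)"
    using sum.remove[OF finite_heavy s(1)] by simp
  also have "\<dots> < - 2 * h ^ 2"
    using g_bound[OF s] sum_nonpos[of "heavy - {s}" g] g_nonpos by auto
  finally show False
    using heavy_light_pairs_ge unfolding g_def heavy_light_pairs_def by (simp add: sum_subtractf)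
qed

end

lemma product_ge_min_endpoints:
  fixes p b q c :: real
  assumes "p \<le> b" "b \<le> q"
  shows "min (p * (c - p)) (q * (c - q)) \<le> b * (c - b)"
proof (cases "b + p \<le> c")
  case True
  have "0 \<le> (b - p) * (c - b - p)"
    using True assms by (intro mult_nonneg_nonneg) auto
  then show ?thesis by (simp add: algebra_simps min_le_iff_disj)
next
  case False
  have "0 \<le> (q - b) * (b + q - c)"
    using False assms by (intro mult_nonneg_nonneg) auto
  then show ?thesis by (simp add: algebra_simps min_le_iff_disj)
qed

lemma upper_endpoint_bound:
  fixes \<alpha> \<delta> n c :: real
  assumes "\<alpha> < 1" "0 < \<delta>" "\<delta> \<le> (1 - \<alpha>) / 8" "0 \<le> n" "(1/2 - \<delta>) * n \<le> c" "1/2 < \<alpha>"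
  shows "(\<alpha> * (1 - \<alpha>) / 4 - 2 * \<delta>) * n ^ 2 \<le> (\<alpha>/2 + \<delta>) * n * (c - (\<alpha>/2 + \<delta>) * n)"
proof -
  let ?q = "(\<alpha>/2 + \<delta>) * n"
  have "0 \<le> \<delta> * (5/2 - 3/2 * \<alpha> - 2 * \<delta>)"
    using assms by (intro mult_nonneg_nonneg) auto
  moreover have "(\<alpha>/2 + \<delta>) * ((1 - \<alpha>)/2 - 2 * \<delta>) - (\<alpha> * (1 - \<alpha>) / 4 - 2 * \<delta>)
      = \<delta> * (5/2 - 3/2 * \<alpha> - 2 * \<delta>)"
    by (simp add: field_simps)
  ultimately have "\<alpha> * (1 - \<alpha>) / 4 - 2 * \<delta> \<le> (\<alpha>/2 + \<delta>) * ((1 - \<alpha>)/2 - 2 * \<delta>)"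
    by linarith
  then have "(\<alpha> * (1 - \<alpha>) / 4 - 2 * \<delta>) * n ^ 2 \<le> (\<alpha>/2 + \<delta>) * ((1 - \<alpha>)/2 - 2 * \<delta>) * n ^ 2"
    by (rule mult_right_mono) simp
  also have "\<dots> = ?q * ((1/2 - \<delta>) * n - ?q)"
    by (simp add: power2_eq_square field_simps)
  also have "\<dots> \<le> ?q * (c - ?q)"
    using assms by (intro mult_left_mono) auto
  finally show ?thesis .
qed

lemma lower_endpoint_bound:
  fixes \<alpha> \<delta> n c h H0 :: real
  assumes "0 < \<delta>" "\<delta> \<le> 1/2" "0 \<le> n" "(1/2 - \<delta>) * n \<le> c" "0 \<le> h" "h \<le> H0"
  shows "(\<alpha> * (1 - \<alpha>) / 4 - 2 * \<delta>) * n ^ 2 - H0 ^ 4 \<le> (c - 2 * h ^ 2) / 2 * (c - (c - 2 * h ^ 2) / 2)"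
proof -
  have "\<alpha> * (1 - \<alpha>) \<le> 1/4"
    using zero_le_power2[of "\<alpha> - 1/2"] by (simp add: power2_eq_square algebra_simps)
  moreover have "(1/2 - \<delta>) ^ 2 / 4 = 1/16 - \<delta>/4 + \<delta> ^ 2 / 4"
    by (simp add: power2_eq_square field_simps)
  ultimately have "\<alpha> * (1 - \<alpha>) / 4 - 2 * \<delta> \<le> (1/2 - \<delta>) ^ 2 / 4"
    using assms(1) zero_le_power2[of \<delta>] by linarith
  then have "(\<alpha> * (1 - \<alpha>) / 4 - 2 * \<delta>) * n ^ 2 \<le> (1/2 - \<delta>) ^ 2 / 4 * n ^ 2"
    by (rule mult_right_mono) simp
  also have "\<dots> = ((1/2 - \<delta>) * n) ^ 2 / 4"
    by (simp add: power_mult_distrib)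
  also have "\<dots> \<le> c ^ 2 / 4"
    using assms by (intro divide_right_mono power_mono) auto
  finally have "(\<alpha> * (1 - \<alpha>) / 4 - 2 * \<delta>) * n ^ 2 \<le> c ^ 2 / 4" .
  moreover have "h ^ 4 \<le> H0 ^ 4"
    using assms by (intro power_mono) auto
  moreover have "(c - 2 * h ^ 2) / 2 * (c - (c - 2 * h ^ 2) / 2) = c ^ 2 / 4 - h ^ 4"
    by (simp add: power2_eq_square power4_eq_xxxx field_simps)
  ultimately show ?thesis
    by linarith
qed

lemma square_deviation_bound:
  fixes n c \<delta> :: real
  assumes "(n - 2 * c) ^ 2 \<le> 3 * n / 2" "0 < \<delta>" "3 / (8 * \<delta> ^ 2) < n"
  shows "(1/2 - \<delta>) * n \<le> c"
proof (rule ccontr)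
  have "0 < 3 / (8 * \<delta> ^ 2)"
    using assms(2) by simp
  then have "0 < n"
    using assms(3) by linarith
  assume "\<not> ?thesis"
  then have "2 * \<delta> * n < n - 2 * c"
    by (simp add: algebra_simps)
  then have "(2 * \<delta> * n) ^ 2 < (n - 2 * c) ^ 2"
    using \<open>0 < n\<close> assms(2) by (intro power_strict_mono) auto
  then have "4 * \<delta> ^ 2 * n * n < 3 / 2 * n"
    using assms(1) by (simp add: power2_eq_square algebra_simps)
  then have "n < 3 / (8 * \<delta> ^ 2)"
    using \<open>0 < n\<close> assms(2) by (simp add: field_simps)
  then show False
    using assms(3) by simp
qed

lemma cut_product_lower_bound:
  fixes \<alpha> \<delta> n c \<beta> h H0 :: real
  assumes \<alpha>: "1/2 < \<alpha>" "\<alpha> < 1" and \<delta>: "0 < \<delta>" "\<delta> \<le> (1 - \<alpha>) / 8"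
    and "0 \<le> n" and c: "(1/2 - \<delta>) * n \<le> c"
    and \<beta>: "\<beta> \<le> (\<alpha>/2 + \<delta>) * n" "c - 2 * h ^ 2 \<le> 2 * \<beta>"
    and h: "0 \<le> h" "h \<le> H0"
  shows "\<alpha> * (1 - \<alpha>) * n ^ 2 / 4 - 2 * \<delta> * n ^ 2 - H0 ^ 4 \<le> \<beta> * (c - \<beta>)"
proof -
  let ?p = "(c - 2 * h ^ 2) / 2" and ?q = "(\<alpha>/2 + \<delta>) * n"
  have "(\<alpha> * (1 - \<alpha>) / 4 - 2 * \<delta>) * n ^ 2 \<le> ?q * (c - ?q)"
    by (rule upper_endpoint_bound) (use assms in auto)
  moreover have "0 \<le> H0 ^ 4"
    using h by simp
  ultimately have "(\<alpha> * (1 - \<alpha>) / 4 - 2 * \<delta>) * n ^ 2 - H0 ^ 4 \<le> ?q * (c - ?q)"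
    by linarith
  moreover have "(\<alpha> * (1 - \<alpha>) / 4 - 2 * \<delta>) * n ^ 2 - H0 ^ 4 \<le> ?p * (c - ?p)"
    by (rule lower_endpoint_bound) (use assms in auto)
  ultimately have "(\<alpha> * (1 - \<alpha>) / 4 - 2 * \<delta>) * n ^ 2 - H0 ^ 4 \<le> min (?p * (c - ?p)) (?q * (c - ?q))"
    by simp
  also have "\<dots> \<le> \<beta> * (c - \<beta>)"
    using \<beta> by (intro product_ge_min_endpoints) auto
  finally show ?thesis
    by (simp add: algebra_simps)
qed

lemma triangle_bound_arith:
  fixes \<alpha> \<epsilon> \<delta> n c \<beta> h H0 S t :: real
  assumes \<alpha>: "1/2 < \<alpha>" "\<alpha> < 1" and \<epsilon>: "0 < \<epsilon>"
    and \<delta>: "0 < \<delta>" "\<delta> \<le> \<epsilon> / 16" "\<delta> \<le> (1 - \<alpha>) / 8"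
    and n: "1 \<le> n" "128 * (H0 ^ 4 + 2 * H0 ^ 2 + 1) / (13 * \<epsilon>) \<le> n"
    and c: "(1/2 - \<delta>) * n \<le> c"
    and \<beta>: "0 \<le> \<beta>" "\<beta> \<le> (\<alpha>/2 + \<delta>) * n" "c - 2 * h ^ 2 \<le> 2 * \<beta>"
    and h: "0 \<le> h" "h \<le> H0"
    and S: "S \<le> 3 * n / 4"
    and t: "\<beta> * (c - \<beta>) - 2 * \<beta> * h ^ 2 - \<delta> * n * S / 2 \<le> t"
  shows "(\<alpha> * (1 - \<alpha>) - \<epsilon>) * n ^ 2 / 4 < t"
proof -
  have "\<beta> * h ^ 2 \<le> n * H0 ^ 2"
  proof (rule mult_mono)
    have "(\<alpha>/2 + \<delta>) * n \<le> 1 * n"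
      using \<alpha> \<delta> n by (intro mult_right_mono) auto
    then show "\<beta> \<le> n"
      using \<beta>(2) by simp
    show "h ^ 2 \<le> H0 ^ 2"
      using h by (intro power_mono) auto
  qed (use n in auto)
  moreover have "\<delta> * n * S / 2 \<le> 3/8 * \<delta> * n ^ 2"
    using mult_left_mono[OF S, of "\<delta> * n"] \<delta> n by (simp add: power2_eq_square)
  ultimately have "\<alpha> * (1 - \<alpha>) * n ^ 2 / 4 - 19/8 * \<delta> * n ^ 2 - H0 ^ 4 - 2 * n * H0 ^ 2 \<le> t"
    using cut_product_lower_bound[OF \<alpha> \<delta>(1,3) _ c \<beta>(2,3) h] n(1) t by linarith
  moreover have "19/8 * \<delta> * n ^ 2 \<le> 19/128 * \<epsilon> * n ^ 2"
    using \<delta> by (intro mult_right_mono) auto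
  moreover have "H0 ^ 4 + 2 * n * H0 ^ 2 < 13/128 * \<epsilon> * n ^ 2"
  proof -
    have "H0 ^ 4 + 2 * H0 ^ 2 + 1 \<le> 13/128 * \<epsilon> * n"
      using n(2) \<epsilon> by (simp add: field_simps)
    then have "(H0 ^ 4 + 2 * H0 ^ 2 + 1) * n \<le> 13/128 * \<epsilon> * n ^ 2"
      using mult_right_mono[of _ _ n] n by (simp add: power2_eq_square)
    moreover have "H0 ^ 4 \<le> H0 ^ 4 * n"
      using mult_left_mono[OF n(1), of "H0 ^ 4"] by simp
    ultimately show ?thesis
      using n by (simp add: algebra_simps)
  qed
  ultimately show ?thesis
    by (simp add: algebra_simps)
qed

context max_cut
begin

lemma num_triangles_gt_if_few_uncut:
  fixes \<alpha> \<epsilon> \<delta> H0 :: real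
  defines "n \<equiv> real (card V)"
  assumes \<alpha>: "1/2 < \<alpha>" "\<alpha> < 1" and \<epsilon>: "0 < \<epsilon>"
    and \<delta>: "0 < \<delta>" "\<delta> \<le> \<epsilon> / 16" "\<delta> \<le> (1 - \<alpha>) / 8"
    and H0: "3 / (4 * \<delta>) \<le> H0"
    and n_large: "3 / (8 * \<delta> ^ 2) < n" "2 * H0 / \<delta> < n" "128 * (H0 ^ 4 + 2 * H0 ^ 2 + 1) / (13 * \<epsilon>) \<le> n"
    and edges: "card V ^ 2 div 4 + 1 \<le> card E"
    and book: "real (max_book V E) < \<alpha> * n / 2"
    and uncut: "(\<Sum>x\<in>V. deg_in x) \<le> 3 * n / 4"
  shows "(\<alpha> * (1 - \<alpha>) - \<epsilon>) * n ^ 2 / 4 < real (num_triangles V E)"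
proof -
  define \<theta> where "\<theta> = \<delta> * n"
  have "0 < 3 / (4 * \<delta>)"
    using \<delta>(1) by simp
  then have "0 < H0"
    using H0 by linarith
  have heavy_few: "2 * H0 < \<theta>"
    using n_large(2) \<delta>(1) unfolding \<theta>_def by (simp add: field_simps)
  then have "0 < \<theta>"
    using \<open>0 < H0\<close> by linarith
  then have n1: "1 \<le> n"
    using \<delta>(1) unfolding \<theta>_def n_def by (simp add: zero_less_mult_iff)
  have min_side: "(1/2 - \<delta>) * n \<le> min_side"
    using min_side_deviation[OF dense_of_card_edges[OF edges]] uncut \<delta>(1) n_large(1)
    unfolding n_def by (intro square_deviation_bound) auto
  have "real (card {x\<in>V. \<theta> \<le> nondeg_out x}) \<le> (\<Sum>x\<in>V. deg_in x) / \<theta>"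
    by (rule card_nondeg_out_ge_le[OF \<open>0 < \<theta>\<close> edges])
  also have "\<dots> \<le> (3 * n / 4) / \<theta>"
    using uncut \<open>0 < \<theta>\<close> by (intro divide_right_mono) auto
  also have "\<dots> = 3 / (4 * \<delta>)"
    using n1 unfolding \<theta>_def by simp
  finally have heavy: "real (card {x\<in>V. \<theta> \<le> nondeg_out x}) \<le> H0"
    using H0 by linarith
  have "0 \<le> ((1 - \<alpha>) / 2 - 3 * \<delta>) * n"
    using \<delta> n1 by (intro mult_nonneg_nonneg) auto
  then have book_gap: "real (max_book V E) + 2 * \<theta> \<le> min_side"
    using book min_side unfolding \<theta>_def by (simp add: algebra_simps)
  interpret heavy_light_cut V E A \<theta>
    using \<open>0 < \<theta>\<close> book_gap sum_nondeg_out_add_two_le[OF edges] heavy heavy_few by unfold_locales auto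
  show ?thesis
  proof (rule triangle_bound_arith[OF \<alpha> \<epsilon> \<delta> n1 n_large(3) min_side \<beta>_nonneg _ min_side_le_\<beta> _ _ uncut])
    show "\<beta> \<le> (\<alpha>/2 + \<delta>) * n"
      using book unfolding \<beta>_def unfolding \<theta>_def by (simp add: algebra_simps)
    show "h \<le> H0"
      using heavy unfolding heavy_def .
    show "\<beta> * (min_side - \<beta>) - 2 * \<beta> * h ^ 2 - \<delta> * n * (\<Sum>x\<in>V. deg_in x) / 2 \<le> real (num_triangles V E)"
      using num_triangles_ge unfolding \<theta>_def .
  qed simp
qed

end

context finite_simple_graph
begin

lemma num_triangles_gt:
  fixes \<alpha> \<epsilon> \<delta> H0 :: real
  defines "n \<equiv> real (card V)"
  assumes \<alpha>: "1/2 < \<alpha>" "\<alpha> < 1" and \<epsilon>: "0 < \<epsilon>"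
    and \<delta>: "0 < \<delta>" "\<delta> \<le> \<epsilon> / 16" "\<delta> \<le> (1 - \<alpha>) / 8"
    and H0: "3 / (4 * \<delta>) \<le> H0"
    and n_large: "3 / (8 * \<delta> ^ 2) < n" "2 * H0 / \<delta> < n" "128 * (H0 ^ 4 + 2 * H0 ^ 2 + 1) / (13 * \<epsilon>) \<le> n"
    and edges: "card V ^ 2 div 4 + 1 \<le> card E"
    and book: "real (max_book V E) < \<alpha> * n / 2"
  shows "(\<alpha> * (1 - \<alpha>) - \<epsilon>) * n ^ 2 / 4 < real (num_triangles V E)"
proof (rule ccontr)
  assume few: "\<not> ?thesis"
  moreover have "\<alpha> * (1 - \<alpha>) \<le> 1/4"
    using zero_le_power2[of "\<alpha> - 1/2"] by (simp add: power2_eq_square algebra_simps)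
  ultimately have few_triangles: "12 * real (num_triangles V E) \<le> n * (3 * n / 4)"
    using \<epsilon> mult_right_mono[of "\<alpha> * (1 - \<alpha>) - \<epsilon>" "1/4" "n ^ 2"] by (simp add: power2_eq_square)
  have "0 < 3 / (8 * \<delta> ^ 2)"
    using \<delta>(1) by simp
  then have "0 < n"
    using n_large(1) by linarith
  then obtain A where "A \<subseteq> V" and A_min: "\<forall>B\<subseteq>V. same_side_pairs A \<le> same_side_pairs B"
    and "n * same_side_pairs A \<le> 12 * real (num_triangles V E)"
    using exists_max_cut_few_uncut dense_of_card_edges[OF edges] unfolding n_def by fastforce
  then have A_uncut: "n * same_side_pairs A \<le> n * (3 * n / 4)"
    using few_triangles by linarith
  interpret max_cut V E A
    using \<open>A \<subseteq> V\<close> A_min by unfold_locales auto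
  have "(\<Sum>x\<in>V. deg_in x) \<le> 3 * n / 4"
    using A_uncut \<open>0 < n\<close> unfolding same_side_pairs_cut by simp
  then show False
    using num_triangles_gt_if_few_uncut[OF \<alpha> \<epsilon> \<delta> H0 n_large[unfolded n_def] edges book[unfolded n_def]]
      few unfolding n_def by simp
qed

end

theorem theorem1:
  fixes \<alpha> \<epsilon> :: real
  assumes "1/2 < \<alpha>" and "\<alpha> < 1" and "\<epsilon> > 0"
  shows "\<exists>n0::nat. \<forall>n > n0. \<forall>(V :: nat set) E.
           simple_graph V E \<and> card V = n \<and> card E \<ge> n^2 div 4 + 1
           \<and> real (max_book V E) < \<alpha> * real n / 2
           \<longrightarrow> real (num_triangles V E) > (\<alpha> * (1 - \<alpha>) - \<epsilon>) * real n ^ 2 / 4"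
proof -
  define \<delta> where "\<delta> = min (\<epsilon> / 16) ((1 - \<alpha>) / 8)"
  define H0 where "H0 = 3 / (4 * \<delta>)"
  have \<delta>: "0 < \<delta>" "\<delta> \<le> \<epsilon> / 16" "\<delta> \<le> (1 - \<alpha>) / 8"
    using assms unfolding \<delta>_def by (simp_all only: min.cobounded1 min.cobounded2) simp
  then have "0 \<le> 3 / (8 * \<delta> ^ 2)" "0 \<le> 2 * H0 / \<delta>" "0 \<le> 128 * (H0 ^ 4 + 2 * H0 ^ 2 + 1) / (13 * \<epsilon>)"
    using assms(3) unfolding H0_def by (simp_all add: add_nonneg_nonneg)
  moreover obtain n0 :: nat
    where "3 / (8 * \<delta> ^ 2) + 2 * H0 / \<delta> + 128 * (H0 ^ 4 + 2 * H0 ^ 2 + 1) / (13 * \<epsilon>) \<le> n0"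
    using real_arch_simple by blast
  ultimately have n_large: "3 / (8 * \<delta> ^ 2) < n" "2 * H0 / \<delta> < n"
      "128 * (H0 ^ 4 + 2 * H0 ^ 2 + 1) / (13 * \<epsilon>) \<le> n" if "n0 < n" for n :: nat
    using that by linarith+
  have "3 / (4 * \<delta>) \<le> H0"
    by (simp add: H0_def)
  show ?thesis
  proof (intro exI allI impI, elim conjE)
    fix n :: nat and V :: "nat set" and E
    assume "n0 < n" "simple_graph V E" "card V = n" "n ^ 2 div 4 + 1 \<le> card E"
      "real (max_book V E) < \<alpha> * real n / 2"
    then show "real (num_triangles V E) > (\<alpha> * (1 - \<alpha>) - \<epsilon>) * real n ^ 2 / 4"
      using finite_simple_graph.num_triangles_gt[OF _ assms \<delta> \<open>3 / (4 * \<delta>) \<le> H0\<close>, of V E]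
        n_large[OF \<open>n0 < n\<close>] finite_simple_graph.intro by blast
  qed
qed

end
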